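(* Let $I$ be a set, and for $n < \omega$ let $G_n \subseteq G_{n+1}$ be locally finite groups. For $t \in I$ and $n < \omega$ let $a^t_n \in G_{n+1}$ and $b^t_n = a^t_0 a^t_1 \cdots a^t_n$ (product in $G_{n+1}$); let $\bar a_n = \langle a^t_n : t \in I\rangle$ and $\bar b_n = \langle b^t_n : t \in I\rangle$. Assume: (α) for every $n$, $\mathrm{tp}_{\mathrm{bs}}(\bar a_n,G_n,G_{n+1}) \subseteq \mathrm{tp}_{\mathrm{bs}}(\bar a_{n+1},G_{n+1},G_{n+2})$ (both viewed as types in the variables $\langle x_t : t\in I\rangle$); (β) for every $n$, the subgroup of $G_{n+1}$ generated by $\{a^t_n : t \in I\}$ intersects $G_n$ in $\{e\}$; (e) each $a^t_n$ commutes with every element of $G_n$. Let $G_\omega = \bigcup_{n<\omega} G_n$. Then there are a locally finite group $G_{\omega+1}$ and elements $b^t_\omega$ ($t \in I$) such that $G_\omega \subseteq G_{\omega+1} = \langle G_\omega \cup \{b^t_\omega : t \in I\}\rangle$ and, with $\bar b_\omega = \langle b^t_\omega : t \in I\rangle$, for every $n < \omega$ we have $\mathrm{tp}_{\mathrm{bs}}(\bar b_\omega,G_n,G_{\omega+1}) = \mathrm{tp}_{\mathrm{bs}}(\bar b_n,G_n,G_{n+1})$.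
   Context: A group is locally finite if every finitely generated subgroup is finite. For $A \subseteq H$ and a (possibly infinite) tuple $\bar a = \langle a_t : t \in I\rangle$ from $H$, $\mathrm{tp}_{\mathrm{bs}}(\bar a,A,H)$ is the set of formulas $\sigma(\bar x,\bar c) = e$ and $\sigma(\bar x,\bar c) \neq e$, where $\sigma$ is a group word in finitely many of the variables $x_t$ ($t\in I$) and a finite tuple of further variables, and $\bar c$ is a finite tuple from $A$, which are satisfied in $H$ when $x_t$ is interpreted as $a_t$. *)

theory Defs
  imports "HOL-Algebra.Algebra"
begin

definition locally_finite_group :: "'a monoid \<Rightarrow> bool" where
  "locally_finite_group G \<longleftrightarrow> group G \<and>
     (\<forall>S. S \<subseteq> carrier G \<and> finite S \<longrightarrow> finite (generate G S))"

text \<open>A letter of a group word: a variable x_t (Inl t) or a parameter c (Inr c),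
  together with a flag saying whether it occurs inverted.\<close>
type_synonym ('i, 'a) gword = "(('i + 'a) \<times> bool) list"

fun letter_val :: "('c, 'd) monoid_scheme \<Rightarrow> ('i \<Rightarrow> 'c) \<Rightarrow> ('a \<Rightarrow> 'c) \<Rightarrow> ('i + 'a) \<times> bool \<Rightarrow> 'c" where
  "letter_val H xs ps (l, inv_flag) =
     (let v = (case l of Inl t \<Rightarrow> xs t | Inr c \<Rightarrow> ps c)
      in if inv_flag then inv\<^bsub>H\<^esub> v else v)"

fun word_val :: "('c, 'd) monoid_scheme \<Rightarrow> ('i \<Rightarrow> 'c) \<Rightarrow> ('a \<Rightarrow> 'c) \<Rightarrow> ('i, 'a) gword \<Rightarrow> 'c" where
  "word_val H xs ps [] = \<one>\<^bsub>H\<^esub>"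
| "word_val H xs ps (l # w) = letter_val H xs ps l \<otimes>\<^bsub>H\<^esub> word_val H xs ps w"

definition word_vars :: "('i, 'a) gword \<Rightarrow> 'i set" where
  "word_vars w = {t. \<exists>b. (Inl t, b) \<in> set w}"

definition word_params :: "('i, 'a) gword \<Rightarrow> 'a set" where
  "word_params w = {c. \<exists>b. (Inr c, b) \<in> set w}"

text \<open>Basic type tp_bs(xs, A, H) in the variables x_t (t in I): a formula is a pair
  (True, w) meaning "w = e" or (False, w) meaning "w \<noteq> e", where w is a group word in
  the variables and parameters from A. Parameters c are interpreted in H as ps c
  (ps = id when A is literally a subset of H; ps = an embedding otherwise).\<close>
definition tp_bs :: "'i set \<Rightarrow> 'a set \<Rightarrow> ('c, 'd) monoid_scheme \<Rightarrow> ('a \<Rightarrow> 'c) \<Rightarrow> ('i \<Rightarrow> 'c)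
                      \<Rightarrow> (bool \<times> ('i, 'a) gword) set" where
  "tp_bs I A H ps xs = {(eq, w). word_vars w \<subseteq> I \<and> word_params w \<subseteq> A \<and>
                                  (word_val H xs ps w = \<one>\<^bsub>H\<^esub> \<longleftrightarrow> eq)}"

fun bprod :: "(nat \<Rightarrow> 'a monoid) \<Rightarrow> ('i \<Rightarrow> nat \<Rightarrow> 'a) \<Rightarrow> 'i \<Rightarrow> nat \<Rightarrow> 'a" where
  "bprod G a t 0 = a t 0"
| "bprod G a t (Suc n) = bprod G a t n \<otimes>\<^bsub>G (Suc (Suc n))\<^esub> a t (Suc n)"

end

theory Submission
  imports Defs
begin

(*
  For a word w with parameters in G_n let w' be w with its parameters deleted.
  Since the a^t_{n+1} commute with G_{n+1}, which contains b_n and the parameters,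
  w(b_{n+1}) = w(b_n) w'(a_{n+1}), a product of an element of G_{n+1} and one of the
  subgroup generated by a_{n+1}; by (beta) it is e iff both factors are. If w(b_n) = e,
  splitting w(b_n) = w(b_{n-1}) w'(a_n) in the same way gives w'(a_n) = e, and (alpha)
  yields w'(a_{n+1}) = e. Hence w(b_m) = e iff w(b_n) = e for all m >= n.

  G_{omega+1} consists of the formal products of elements of G_omega and new symbols b_t,
  two products being identified when their values at b_m agree for all large m. On products
  with parameters in G_n this identification is equality of the values at b_n alone, so every
  finitely generated subgroup embeds into some locally finite G_{n+1}; in particular every
  element has finite order, which is what makes the quotient a group.
*)

section \<open>Group words\<close>

definition letters_in ::
    "'i set \<Rightarrow> 'c set \<Rightarrow> ('i \<Rightarrow> 'c) \<Rightarrow> ('a \<Rightarrow> 'c) \<Rightarrow> ('i, 'a) gword \<Rightarrow> bool" where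
  "letters_in I S x ps w \<longleftrightarrow>
     (\<forall>l\<in>set w. case fst l of Inl t \<Rightarrow> t \<in> I \<and> x t \<in> S | Inr c \<Rightarrow> ps c \<in> S)"

lemma letters_in_Nil [simp]: "letters_in I S x ps []"
  by (simp add: letters_in_def)

lemma letters_in_Cons [simp]:
  "letters_in I S x ps (l # w) \<longleftrightarrow>
     (case fst l of Inl t \<Rightarrow> t \<in> I \<and> x t \<in> S | Inr c \<Rightarrow> ps c \<in> S) \<and> letters_in I S x ps w"
  by (simp add: letters_in_def)

definition inv_word :: "('i, 'a) gword \<Rightarrow> ('i, 'a) gword" where
  "inv_word w = rev (map (\<lambda>(v, f). (v, \<not> f)) w)"

definition drop_params :: "('i, 'a) gword \<Rightarrow> ('i, 'a) gword" where
  "drop_params w = filter (\<lambda>l. case fst l of Inl _ \<Rightarrow> True | Inr _ \<Rightarrow> False) w"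

lemma letters_in_inv_word [simp]: "letters_in I S x ps (inv_word w) = letters_in I S x ps w"
  by (auto simp add: letters_in_def inv_word_def)

lemma word_vars_append: "word_vars (w @ w') = word_vars w \<union> word_vars w'"
  by (auto simp: word_vars_def)

lemma word_params_append: "word_params (w @ w') = word_params w \<union> word_params w'"
  by (auto simp: word_params_def)

lemma set_inv_word: "(v, f) \<in> set (inv_word w) \<longleftrightarrow> (v, \<not> f) \<in> set w"
  by (force simp: inv_word_def)

lemma word_vars_inv_word: "word_vars (inv_word w) = word_vars w"
  unfolding word_vars_def set_inv_word by (auto simp: ex_bool_eq)

lemma word_params_inv_word: "word_params (inv_word w) = word_params w"
  unfolding word_params_def set_inv_word by (auto simp: ex_bool_eq)

context group
begin

lemma letter_val_closed:
  "letters_in I (carrier G) x ps (l # w) \<Longrightarrow> letter_val G x ps l \<in> carrier G"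
  by (cases l) (auto simp: Let_def split: sum.splits)

lemma word_val_closed: "letters_in I (carrier G) x ps w \<Longrightarrow> word_val G x ps w \<in> carrier G"
proof (induction w)
  case (Cons l w)
  then show ?case using letter_val_closed[OF Cons.prems] by (simp del: letter_val.simps)
qed simp

lemma word_val_append:
  assumes "letters_in I (carrier G) x ps w" "letters_in I (carrier G) x ps w'"
  shows "word_val G x ps (w @ w') = word_val G x ps w \<otimes> word_val G x ps w'"
  using assms
proof (induction w)
  case (Cons l w)
  then show ?case
    using letter_val_closed[OF Cons.prems(1)] word_val_closed[of I x ps]
    by (simp del: letter_val.simps add: m_assoc)
qed (simp add: word_val_closed)

lemma word_val_inv_word:
  "letters_in I (carrier G) x ps w \<Longrightarrow> word_val G x ps (inv_word w) = inv (word_val G x ps w)"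
proof (induction w)
  case Nil
  then show ?case by (simp add: inv_word_def)
next
  case (Cons l w)
  obtain v f where l: "l = (v, f)" by (cases l)
  have lc: "letter_val G x ps l \<in> carrier G"
    using Cons.prems by (rule letter_val_closed)
  have "letter_val G x ps (v, \<not> f) = inv (letter_val G x ps l)"
    using Cons.prems by (cases f) (auto simp: l Let_def split: sum.splits)
  moreover have "inv_word (l # w) = inv_word w @ [(v, \<not> f)]"
    by (simp add: inv_word_def l)
  ultimately show ?case
    using Cons lc word_val_closed[of I x ps w]
    by (simp add: word_val_append l inv_mult_group split: sum.splits)
qed

lemma word_val_in_subgroup:
  "subgroup S G \<Longrightarrow> letters_in I S x ps w \<Longrightarrow> word_val G x ps w \<in> S"
  by (induction w)
    (auto simp: Let_def subgroup.one_closed subgroup.m_closed subgroup.m_inv_closed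
          split: sum.splits)

lemma word_val_restrict:
  "subgroup S G \<Longrightarrow> letters_in I S x ps w \<Longrightarrow> word_val (G\<lparr>carrier := S\<rparr>) x ps w = word_val G x ps w"
  by (induction w) (auto simp: Let_def split: sum.splits)

lemma drop_params_in_generate:
  "word_vars w \<subseteq> I \<Longrightarrow> word_val G q ps (drop_params w) \<in> generate G (q ` I)"
proof (induction w)
  case (Cons l w)
  obtain v f where l: "l = (v, f)" by (cases l)
  have w: "word_vars w \<subseteq> I" using Cons.prems by (auto simp: word_vars_def)
  show ?case
  proof (cases v)
    case (Inl t)
    then have "t \<in> I" using Cons.prems by (auto simp: word_vars_def l)
    then have "letter_val G q ps l \<in> generate G (q ` I)"
      by (cases f) (auto simp: l Inl generate.incl generate.inv)
    then show ?thesis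
      using Cons.IH[OF w] by (simp del: letter_val.simps add: drop_params_def l Inl generate.eng)
  qed (use Cons.IH[OF w] in \<open>simp add: drop_params_def l\<close>)
qed (simp add: drop_params_def generate.one)

lemma inv_commute:
  assumes "x \<in> carrier G" "y \<in> carrier G" "x \<otimes> y = y \<otimes> x"
  shows "inv x \<otimes> y = y \<otimes> inv x"
proof -
  have "inv x \<otimes> y = inv x \<otimes> (y \<otimes> x) \<otimes> inv x" using assms(1,2) by (simp add: m_assoc)
  also have "\<dots> = y \<otimes> inv x" using assms(1,2) by (simp add: assms(3)[symmetric] m_assoc[symmetric])
  finally show ?thesis .
qed

lemma letter_val_split_commuting:
  assumes S: "subgroup S G" and p: "p t \<in> S" and q: "q t \<in> carrier G"
    and comm: "\<forall>s\<in>S. q t \<otimes> s = s \<otimes> q t" and r: "r t = p t \<otimes> q t"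
  shows "letter_val G r ps (Inl t, f) = letter_val G p ps (Inl t, f) \<otimes> letter_val G q ps (Inl t, f)"
    and "letter_val G p ps (Inl t, f) \<in> S" "letter_val G q ps (Inl t, f) \<in> carrier G"
    and "\<And>s. s \<in> S \<Longrightarrow> letter_val G q ps (Inl t, f) \<otimes> s = s \<otimes> letter_val G q ps (Inl t, f)"
proof -
  have SG: "S \<subseteq> carrier G" using S by (rule subgroup.subset)
  have inv_q: "inv q t \<otimes> s = s \<otimes> inv q t" if "s \<in> S" for s
    using that SG q comm by (intro inv_commute) auto
  have "inv p t \<in> S" using S p by (rule subgroup.m_inv_closed)
  then have "inv (p t \<otimes> q t) = inv p t \<otimes> inv q t"
    using p q SG by (simp add: inv_mult_group inv_q subset_iff)
  then show "letter_val G r ps (Inl t, f) =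
      letter_val G p ps (Inl t, f) \<otimes> letter_val G q ps (Inl t, f)"
    by (simp add: r Let_def)
  show "letter_val G p ps (Inl t, f) \<in> S" using S p by (simp add: Let_def subgroup.m_inv_closed)
  show "letter_val G q ps (Inl t, f) \<in> carrier G" using q by (simp add: Let_def)
  show "letter_val G q ps (Inl t, f) \<otimes> s = s \<otimes> letter_val G q ps (Inl t, f)" if "s \<in> S" for s
    using that comm inv_q by (simp add: Let_def)
qed

lemma word_val_split_commuting:
  assumes S: "subgroup S G" and w: "letters_in I S p ps w"
    and q: "\<And>t. t \<in> I \<Longrightarrow> q t \<in> carrier G"
    and comm: "\<And>t s. t \<in> I \<Longrightarrow> s \<in> S \<Longrightarrow> q t \<otimes> s = s \<otimes> q t"
    and r: "\<And>t. t \<in> I \<Longrightarrow> r t = p t \<otimes> q t"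
  shows "word_val G r ps w = word_val G p ps w \<otimes> word_val G q ps (drop_params w)"
  using w
proof (induction w)
  case Nil
  then show ?case by (simp add: drop_params_def)
next
  case (Cons l w)
  have SG: "S \<subseteq> carrier G" using S by (rule subgroup.subset)
  define P where "P = word_val G p ps w"
  define Q where "Q = word_val G q ps (drop_params w)"
  have P: "P \<in> S" using Cons.prems unfolding P_def by (intro word_val_in_subgroup[OF S, of I]) simp
  have Q: "Q \<in> carrier G" unfolding Q_def
    using Cons.prems q
    by (intro word_val_closed[of I]) (auto simp: letters_in_def drop_params_def split: sum.splits)
  have IH: "word_val G r ps w = P \<otimes> Q" using Cons by (simp add: P_def Q_def)
  obtain v f where l: "l = (v, f)" by (cases l)
  show ?case
  proof (cases v)
    case (Inl t)
    have t: "t \<in> I" "p t \<in> S" using Cons.prems by (auto simp: l Inl)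
    have "\<forall>s\<in>S. q t \<otimes> s = s \<otimes> q t" using comm t(1) by blast
    note letter = letter_val_split_commuting[where p = p and q = q and r = r and t = t and ps = ps
        and f = f, OF S t(2) q[OF t(1)] this r[OF t(1)]]
    have "letter_val G q ps (Inl t, f) \<otimes> P = P \<otimes> letter_val G q ps (Inl t, f)" using letter(4) P .
    then have "(letter_val G p ps (Inl t, f) \<otimes> letter_val G q ps (Inl t, f)) \<otimes> (P \<otimes> Q)
             = (letter_val G p ps (Inl t, f) \<otimes> P) \<otimes> (letter_val G q ps (Inl t, f) \<otimes> Q)"
      using letter(2,3) P Q SG
      by (simp add: m_assoc[symmetric] subset_iff) (simp add: m_assoc subset_iff)
    then show ?thesis
      using IH letter(1) by (simp del: letter_val.simps add: l Inl drop_params_def P_def Q_def)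
  next
    case (Inr c)
    have "ps c \<in> carrier G" using Cons.prems SG by (auto simp: l Inr)
    then show ?thesis
      using IH P Q SG by (cases f) (auto simp: l Inr drop_params_def m_assoc P_def Q_def)
  qed
qed

lemma mult_eq_one_iff_inter_trivial:
  assumes H: "subgroup H G" and x: "x \<in> H" and y: "y \<in> K" "K \<subseteq> carrier G"
    and KH: "K \<inter> H = {\<one>}"
  shows "x \<otimes> y = \<one> \<longleftrightarrow> x = \<one> \<and> y = \<one>"
proof
  assume xy: "x \<otimes> y = \<one>"
  have xG: "x \<in> carrier G" using H x subgroup.subset by blast
  have yG: "y \<in> carrier G" using y by blast
  have "inv x = y" by (rule inv_equality[OF inv_comm[OF xy xG yG] xG yG])
  moreover have "inv x \<in> H" using H x by (rule subgroup.m_inv_closed)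
  ultimately have "y = \<one>" using y KH by blast
  then show "x = \<one> \<and> y = \<one>" using xy xG by simp
qed simp

end

lemma finite_image_factor:
  assumes "finite (f ` A)" "\<And>x y. x \<in> A \<Longrightarrow> y \<in> A \<Longrightarrow> f x = f y \<Longrightarrow> g x = g y"
  shows "finite (g ` A)"
proof -
  define s where "s v = (SOME x. x \<in> A \<and> f x = v)" for v
  have "g ` A \<subseteq> (g \<circ> s) ` f ` A"
  proof
    fix z assume "z \<in> g ` A"
    then obtain x where x: "x \<in> A" "z = g x" by blast
    have "s (f x) \<in> A \<and> f (s (f x)) = f x" unfolding s_def by (rule someI[of _ x]) (simp add: x(1))
    then have "z = (g \<circ> s) (f x)" using assms(2)[of x "s (f x)"] x by simp
    then show "z \<in> (g \<circ> s) ` f ` A" using x(1) by blast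
  qed
  then show ?thesis using finite_surj[OF assms(1)] by (simp add: image_comp)
qed

lemma locally_finite_group_pow_eq_one:
  assumes "locally_finite_group G" "x \<in> carrier G"
  shows "\<exists>k>0. x [^]\<^bsub>G\<^esub> (k::nat) = \<one>\<^bsub>G\<^esub>"
proof -
  interpret group G using assms(1) by (simp add: locally_finite_group_def)
  have "finite (generate G {x})" using assms by (simp add: locally_finite_group_def)
  moreover have "\<one>\<^bsub>G\<^esub> \<in> generate G {x}" by (rule generate.one)
  ultimately have "ord x > 0" using generate_pow_card[OF assms(2)] card_gt_0_iff by auto
  then show ?thesis using assms(2) by (intro exI[of _ "ord x"]) simp
qed

section \<open>Quotients of list monoids\<close>

locale list_congruence =
  fixes A :: "'c set" and E :: "'c list \<Rightarrow> 'c list \<Rightarrow> bool"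
  assumes equivp: "equivp E"
    and append_cong: "\<lbrakk>E u u'; E v v'; u \<in> lists A; u' \<in> lists A; v \<in> lists A; v' \<in> lists A\<rbrakk>
                        \<Longrightarrow> E (u @ v) (u' @ v')"
    and power_congruent_Nil: "u \<in> lists A \<Longrightarrow> \<exists>k. E (concat (replicate (Suc k) u)) []"
begin

text \<open>Classes are represented by lists chosen with SOME, so that the carrier is a set of
  lists, the carrier type fixed by the theorem.\<close>

definition rep :: "'c list \<Rightarrow> 'c list" where
  "rep u = (SOME u'. u' \<in> lists A \<and> E u' u)"

definition quotient_group :: "'c list monoid" where
  "quotient_group = \<lparr>carrier = rep ` lists A, monoid.mult = (\<lambda>x y. rep (x @ y)), one = rep []\<rparr>"

lemma quotient_group_simps [simp]:
  "carrier quotient_group = rep ` lists A" "\<one>\<^bsub>quotient_group\<^esub> = rep []"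
  by (simp_all add: quotient_group_def)

lemma quotient_group_mult: "x \<otimes>\<^bsub>quotient_group\<^esub> y = rep (x @ y)"
  by (simp add: quotient_group_def)

lemma E_refl: "E u u" and E_sym: "E u v \<Longrightarrow> E v u" and E_trans: "E u v \<Longrightarrow> E v w \<Longrightarrow> E u w"
  using equivp by (auto elim: equivpE reflpE sympE transpE)

lemma rep_spec: "u \<in> lists A \<Longrightarrow> rep u \<in> lists A \<and> E (rep u) u"
  unfolding rep_def by (rule someI[of _ u]) (simp add: E_refl)

lemma rep_cong: "E u v \<Longrightarrow> rep u = rep v"
proof -
  assume "E u v"
  then have "(\<lambda>u'. u' \<in> lists A \<and> E u' u) = (\<lambda>u'. u' \<in> lists A \<and> E u' v)"
    by (blast intro: E_trans E_sym)
  then show ?thesis by (simp add: rep_def)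
qed

lemma rep_eq_iff: "u \<in> lists A \<Longrightarrow> v \<in> lists A \<Longrightarrow> rep u = rep v \<longleftrightarrow> E u v"
  by (metis rep_spec rep_cong E_sym E_trans)

lemma quotient_group_carrierD: "x \<in> carrier quotient_group \<Longrightarrow> x \<in> lists A \<and> rep x = x"
  using rep_spec rep_cong by auto

lemma rep_mult: "u \<in> lists A \<Longrightarrow> v \<in> lists A \<Longrightarrow> rep u \<otimes>\<^bsub>quotient_group\<^esub> rep v = rep (u @ v)"
  unfolding quotient_group_mult by (intro rep_cong append_cong) (use rep_spec in auto)

lemma rep_power_mult_eq_one:
  assumes "u \<in> lists A"
  obtains k where "rep (concat (replicate k u)) \<otimes>\<^bsub>quotient_group\<^esub> rep u = \<one>\<^bsub>quotient_group\<^esub>"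
proof -
  obtain k where "E (concat (replicate (Suc k) u)) []" using power_congruent_Nil[OF assms] by blast
  moreover have "concat (replicate k u) @ u = concat (replicate (Suc k) u)"
    by (induction k) auto
  ultimately have "rep (concat (replicate k u) @ u) = rep []" by (simp add: rep_cong)
  moreover have "concat (replicate k u) \<in> lists A" using assms by (induction k) auto
  ultimately show thesis using assms by (intro that[of k]) (simp add: rep_mult)
qed

lemma group_quotient: "group quotient_group"
proof (rule groupI)
  fix x y assume "x \<in> carrier quotient_group" "y \<in> carrier quotient_group"
  then have "x \<in> lists A" "y \<in> lists A" using quotient_group_carrierD by blast+
  then show "x \<otimes>\<^bsub>quotient_group\<^esub> y \<in> carrier quotient_group" by (simp add: quotient_group_mult)
next
  show "\<one>\<^bsub>quotient_group\<^esub> \<in> carrier quotient_group" by simp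
next
  fix x y z
  assume "x \<in> carrier quotient_group" "y \<in> carrier quotient_group" "z \<in> carrier quotient_group"
  then have "x \<in> lists A" "y \<in> lists A" "z \<in> lists A" "rep z = z" "rep x = x"
    using quotient_group_carrierD by blast+
  then show "x \<otimes>\<^bsub>quotient_group\<^esub> y \<otimes>\<^bsub>quotient_group\<^esub> z = x \<otimes>\<^bsub>quotient_group\<^esub> (y \<otimes>\<^bsub>quotient_group\<^esub> z)"
    using rep_mult[of "x @ y" z] rep_mult[of x "y @ z"] by (simp add: quotient_group_mult)
next
  fix x assume "x \<in> carrier quotient_group"
  then have "x \<in> lists A" "rep x = x" using quotient_group_carrierD by blast+
  then show "\<one>\<^bsub>quotient_group\<^esub> \<otimes>\<^bsub>quotient_group\<^esub> x = x" using rep_mult[of "[]" x] by simp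
next
  fix x assume "x \<in> carrier quotient_group"
  then have x: "x \<in> lists A" "rep x = x" using quotient_group_carrierD by blast+
  then obtain k where "rep (concat (replicate k x)) \<otimes>\<^bsub>quotient_group\<^esub> x = \<one>\<^bsub>quotient_group\<^esub>"
    by (metis rep_power_mult_eq_one)
  moreover have "concat (replicate k x) \<in> lists A" using x by auto
  ultimately show "\<exists>y\<in>carrier quotient_group. y \<otimes>\<^bsub>quotient_group\<^esub> x = \<one>\<^bsub>quotient_group\<^esub>" by auto
qed

lemma generate_quotient_subset:
  assumes "B \<subseteq> A" "S \<subseteq> rep ` lists B"
  shows "generate quotient_group S \<subseteq> rep ` lists B"
proof
  interpret group quotient_group by (rule group_quotient)
  fix x assume "x \<in> generate quotient_group S"
  then show "x \<in> rep ` lists B"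
  proof induction
    case (inv h)
    then obtain u where u: "u \<in> lists B" "h = rep u" using assms(2) by blast
    then have uA: "u \<in> lists A" using assms(1) by blast
    then obtain k where "rep (concat (replicate k u)) \<otimes>\<^bsub>quotient_group\<^esub> h = \<one>\<^bsub>quotient_group\<^esub>"
      using u(2) rep_power_mult_eq_one by metis
    then have "inv\<^bsub>quotient_group\<^esub> h = rep (concat (replicate k u))"
      using uA u(2) by (intro inv_equality) auto
    then show ?case using u(1) by auto
  next
    case (eng h1 h2)
    then obtain u v where uv: "u \<in> lists B" "v \<in> lists B" "h1 = rep u" "h2 = rep v" by blast
    then have "h1 \<otimes>\<^bsub>quotient_group\<^esub> h2 = rep (u @ v)"
      using assms(1) lists_mono by (blast intro: rep_mult)
    then show ?case using uv by auto
  next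
    case one
    have "[] \<in> lists B" by simp
    then show ?case by (simp only: quotient_group_simps image_eqI)
  qed (use assms(2) in blast)
qed

lemma carrier_quotient_generate:
  "carrier quotient_group = generate quotient_group ((\<lambda>c. rep [c]) ` A)"
proof
  interpret group quotient_group by (rule group_quotient)
  show "generate quotient_group ((\<lambda>c. rep [c]) ` A) \<subseteq> carrier quotient_group"
    by (rule generate_incl) auto
  show "carrier quotient_group \<subseteq> generate quotient_group ((\<lambda>c. rep [c]) ` A)"
  proof
    fix x assume "x \<in> carrier quotient_group"
    then obtain u where u: "u \<in> lists A" "x = rep u" by auto
    have "rep v \<in> generate quotient_group ((\<lambda>c. rep [c]) ` A)" if "v \<in> lists A" for v
      using that
    proof (induction v)
      case Nil
      then show ?case using generate.one[of quotient_group] by simp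
    next
      case (Cons c v)
      then have "rep (c # v) = rep [c] \<otimes>\<^bsub>quotient_group\<^esub> rep v" by (simp add: rep_mult)
      moreover have "rep [c] \<in> generate quotient_group ((\<lambda>c. rep [c]) ` A)"
        using Cons.hyps(1) by (intro generate.incl imageI)
      ultimately show ?case using Cons by (simp add: generate.eng)
    qed
    then show "x \<in> generate quotient_group ((\<lambda>c. rep [c]) ` A)" using u by blast
  qed
qed

lemma locally_finite_quotient:
  assumes "\<And>B. finite B \<Longrightarrow> B \<subseteq> A \<Longrightarrow> finite (rep ` lists B)"
  shows "locally_finite_group quotient_group"
  unfolding locally_finite_group_def
proof (intro conjI allI impI group_quotient)
  fix S assume S: "S \<subseteq> carrier quotient_group \<and> finite S"
  define B where "B = \<Union> (set ` S)"
  have BA: "B \<subseteq> A"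
  proof
    fix c assume "c \<in> B"
    then obtain x where "x \<in> S" "c \<in> set x" by (auto simp: B_def)
    then show "c \<in> A" using S quotient_group_carrierD by blast
  qed
  have SB: "S \<subseteq> rep ` lists B"
  proof
    fix x assume "x \<in> S"
    moreover have "rep x = x" using S \<open>x \<in> S\<close> quotient_group_carrierD by blast
    moreover have "x \<in> lists B" using \<open>x \<in> S\<close> by (auto simp: B_def)
    ultimately show "x \<in> rep ` lists B" by (metis image_eqI)
  qed
  have "finite B" using S by (simp add: B_def)
  with BA show "finite (generate quotient_group S)"
    using finite_subset[OF generate_quotient_subset[OF BA SB] assms] by blast
qed

end

section \<open>Unions of chains of groups\<close>

locale locally_finite_chain =
  fixes G :: "nat \<Rightarrow> 'a monoid"
  assumes locally_finite_stage: "\<And>n. locally_finite_group (G n)"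
    and subgroup_stage_Suc: "\<And>n. subgroup (carrier (G n)) (G (Suc n))"
    and stage_restrict: "\<And>n. G n = (G (Suc n))\<lparr>carrier := carrier (G n)\<rparr>"
begin

lemma group_stage: "group (G n)"
  using locally_finite_stage by (simp add: locally_finite_group_def)

definition G\<omega> :: "'a monoid" where
  "G\<omega> = \<lparr>carrier = (\<Union>n. carrier (G n)), monoid.mult = monoid.mult (G 0), one = \<one>\<^bsub>G 0\<^esub>\<rparr>"

lemma stage_mono: "i \<le> j \<Longrightarrow> carrier (G i) \<subseteq> carrier (G j)"
proof (induction j rule: dec_induct)
  case (step j)
  then show ?case using subgroup.subset[OF subgroup_stage_Suc[of j]] by blast
qed simp

lemma stage_structure: "monoid.mult (G n) = monoid.mult (G 0) \<and> \<one>\<^bsub>G n\<^esub> = \<one>\<^bsub>G 0\<^esub>"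
proof (induction n)
  case (Suc n)
  have "monoid.mult (G n) = monoid.mult (G (Suc n))" "\<one>\<^bsub>G n\<^esub> = \<one>\<^bsub>G (Suc n)\<^esub>"
    using arg_cong[OF stage_restrict[of n], of monoid.mult]
      arg_cong[OF stage_restrict[of n], of one]
    by simp_all
  with Suc show ?case by simp
qed simp

lemma stage_eq_union_restrict: "G n = G\<omega>\<lparr>carrier := carrier (G n)\<rparr>"
  using stage_structure[of n] by (intro monoid.equality) (simp_all add: G\<omega>_def)

lemma carrier_union: "carrier G\<omega> = (\<Union>n. carrier (G n))"
  by (simp add: G\<omega>_def)

lemma finite_subset_stage:
  assumes "finite B" "B \<subseteq> carrier G\<omega>"
  shows "\<exists>n. B \<subseteq> carrier (G n)"
  using assms
proof (induction B rule: finite_induct)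
  case (insert x B)
  obtain n where "B \<subseteq> carrier (G n)" using insert by auto
  moreover obtain m where "x \<in> carrier (G m)" using insert.prems by (auto simp: carrier_union)
  ultimately have "insert x B \<subseteq> carrier (G (max n m))"
    using stage_mono[of n "max n m"] stage_mono[of m "max n m"] by auto
  then show ?case by blast
qed simp

lemma union_mult: "x \<otimes>\<^bsub>G\<omega>\<^esub> y = x \<otimes>\<^bsub>G n\<^esub> y"
  using stage_structure[of n] by (simp add: G\<omega>_def)

lemma union_one: "\<one>\<^bsub>G\<omega>\<^esub> = \<one>\<^bsub>G n\<^esub>"
  using stage_structure[of n] by (simp add: G\<omega>_def)

lemma group_union: "group G\<omega>"
proof (rule groupI)
  fix x y assume "x \<in> carrier G\<omega>" "y \<in> carrier G\<omega>"
  then obtain n where "x \<in> carrier (G n)" "y \<in> carrier (G n)"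
    using finite_subset_stage[of "{x, y}"] by auto
  then show "x \<otimes>\<^bsub>G\<omega>\<^esub> y \<in> carrier G\<omega>"
    using group.subgroup_self[OF group_stage] by (auto simp: union_mult[of _ _ n] carrier_union
        intro: subgroup.m_closed)
next
  show "\<one>\<^bsub>G\<omega>\<^esub> \<in> carrier G\<omega>"
    using group.subgroup_self[OF group_stage] by (auto simp: union_one[of 0] carrier_union
        intro: subgroup.one_closed)
next
  fix x y z assume "x \<in> carrier G\<omega>" "y \<in> carrier G\<omega>" "z \<in> carrier G\<omega>"
  then obtain n where "x \<in> carrier (G n)" "y \<in> carrier (G n)" "z \<in> carrier (G n)"
    using finite_subset_stage[of "{x, y, z}"] by auto
  then show "x \<otimes>\<^bsub>G\<omega>\<^esub> y \<otimes>\<^bsub>G\<omega>\<^esub> z = x \<otimes>\<^bsub>G\<omega>\<^esub> (y \<otimes>\<^bsub>G\<omega>\<^esub> z)"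
    by (simp add: union_mult[of _ _ n] group.is_monoid[OF group_stage] monoid.m_assoc)
next
  fix x assume "x \<in> carrier G\<omega>"
  then obtain n where x: "x \<in> carrier (G n)" by (auto simp: carrier_union)
  then show "\<one>\<^bsub>G\<omega>\<^esub> \<otimes>\<^bsub>G\<omega>\<^esub> x = x"
    by (simp add: union_mult[of _ _ n] union_one[of n] group.is_monoid[OF group_stage])
  have "inv\<^bsub>G n\<^esub> x \<in> carrier G\<omega>" "inv\<^bsub>G n\<^esub> x \<otimes>\<^bsub>G\<omega>\<^esub> x = \<one>\<^bsub>G\<omega>\<^esub>"
    using x group.inv_closed[OF group_stage x] group.l_inv[OF group_stage x]
    by (auto simp: union_mult[of _ _ n] union_one[of n] carrier_union)
  then show "\<exists>y\<in>carrier G\<omega>. y \<otimes>\<^bsub>G\<omega>\<^esub> x = \<one>\<^bsub>G\<omega>\<^esub>" by blast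
qed

lemma subgroup_stage: "subgroup (carrier (G n)) G\<omega>"
  using group.group_incl_imp_subgroup[OF group_union, of "carrier (G n)"] group_stage[of n]
  by (auto simp: carrier_union stage_eq_union_restrict[symmetric])

lemma generate_stage:
  "B \<subseteq> carrier (G n) \<Longrightarrow> generate (G n) B = generate G\<omega> B"
  using group.generate_consistent[OF group_union _ subgroup_stage]
  by (simp add: stage_eq_union_restrict[symmetric])

lemma word_val_stage:
  "letters_in I (carrier (G n)) x ps w \<Longrightarrow> word_val (G n) x ps w = word_val G\<omega> x ps w"
  using group.word_val_restrict[OF group_union subgroup_stage]
  by (simp add: stage_eq_union_restrict[symmetric])

lemma nat_pow_stage: "x [^]\<^bsub>G n\<^esub> (k::nat) = x [^]\<^bsub>G\<omega>\<^esub> k"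
  using monoid.nat_pow_consistent[OF group.is_monoid[OF group_union], of x k "carrier (G n)"]
  by (simp add: stage_eq_union_restrict[symmetric])

end

section \<open>Stabilisation of the basic types of the b_n\<close>

locale increment_chain = locally_finite_chain G for G :: "nat \<Rightarrow> 'a monoid" +
  fixes I :: "'i set" and a :: "'i \<Rightarrow> nat \<Rightarrow> 'a"
  assumes a_in: "\<And>n t. t \<in> I \<Longrightarrow> a t n \<in> carrier (G (Suc n))"
    and alpha: "\<And>n. tp_bs I (carrier (G n)) (G (Suc n)) id (\<lambda>t. a t n)
                    \<subseteq> tp_bs I (carrier (G (Suc n))) (G (Suc (Suc n))) id (\<lambda>t. a t (Suc n))"
    and beta: "\<And>n. generate (G (Suc n)) ((\<lambda>t. a t n) ` I) \<inter> carrier (G n) = {\<one>\<^bsub>G n\<^esub>}"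
    and a_commute: "\<And>n t g. t \<in> I \<Longrightarrow> g \<in> carrier (G n) \<Longrightarrow>
                      a t n \<otimes>\<^bsub>G (Suc n)\<^esub> g = g \<otimes>\<^bsub>G (Suc n)\<^esub> a t n"
begin

definition stage_word :: "nat \<Rightarrow> ('i, 'a) gword \<Rightarrow> bool" where
  "stage_word n w \<longleftrightarrow> word_vars w \<subseteq> I \<and> word_params w \<subseteq> carrier (G n)"

lemma stage_word_letters_in:
  assumes "stage_word n w" "carrier (G n) \<subseteq> S" "\<And>t. t \<in> I \<Longrightarrow> x t \<in> S"
  shows "letters_in I S x id w"
  unfolding letters_in_def
proof
  fix l assume l: "l \<in> set w"
  obtain v f where v: "l = (v, f)" by (cases l)
  show "case fst l of Inl t \<Rightarrow> t \<in> I \<and> x t \<in> S | Inr c \<Rightarrow> id c \<in> S"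
  proof (cases v)
    case (Inl t)
    then have "t \<in> I" using l assms(1) by (auto simp: v stage_word_def word_vars_def)
    then show ?thesis using assms(3) by (simp add: v Inl)
  next
    case (Inr c)
    then have "c \<in> carrier (G n)" using l assms(1) by (auto simp: v stage_word_def word_params_def)
    then show ?thesis using assms(2) by (auto simp: v Inr)
  qed
qed

lemma stage_word_mono: "stage_word n w \<Longrightarrow> n \<le> m \<Longrightarrow> stage_word m w"
  using stage_mono[of n m] by (auto simp: stage_word_def)

lemma stage_word_drop_params: "stage_word n w \<Longrightarrow> stage_word n (drop_params w)"
  by (auto simp: stage_word_def word_vars_def word_params_def drop_params_def)

lemma a_in_union: "t \<in> I \<Longrightarrow> a t n \<in> carrier G\<omega>"
  using a_in by (auto simp: carrier_union)

lemma bprod_in: "t \<in> I \<Longrightarrow> bprod G a t n \<in> carrier (G (Suc n))"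
proof (induction n)
  case (Suc n)
  then have "bprod G a t n \<in> carrier (G (Suc (Suc n)))"
    using stage_mono[of "Suc n" "Suc (Suc n)"] by auto
  then show ?case
    using Suc a_in group.subgroup_self[OF group_stage] by (auto intro: subgroup.m_closed)
qed (simp add: a_in)

lemma bprod_in_union: "t \<in> I \<Longrightarrow> bprod G a t n \<in> carrier G\<omega>"
  using bprod_in by (auto simp: carrier_union)

definition bprev :: "nat \<Rightarrow> 'i \<Rightarrow> 'a" where
  "bprev n t = (case n of 0 \<Rightarrow> \<one>\<^bsub>G\<omega>\<^esub> | Suc k \<Rightarrow> bprod G a t k)"

lemma bprev_in: "t \<in> I \<Longrightarrow> bprev n t \<in> carrier (G n)"
  using group.subgroup_self[OF group_stage] bprod_in
  by (cases n) (auto simp: bprev_def union_one[of 0] intro: subgroup.one_closed)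

lemma bprod_eq_bprev_mult: "t \<in> I \<Longrightarrow> bprod G a t n = bprev n t \<otimes>\<^bsub>G\<omega>\<^esub> a t n"
  using monoid.l_one[OF group.is_monoid[OF group_union] a_in_union]
  by (cases n) (simp_all add: bprev_def union_mult[of _ _ "Suc n"])

definition bval :: "nat \<Rightarrow> ('i, 'a) gword \<Rightarrow> 'a" where
  "bval n w = word_val G\<omega> (\<lambda>t. bprod G a t n) id w"

lemma bval_split:
  assumes "stage_word n w"
  shows "bval n w = word_val G\<omega> (bprev n) id w
                    \<otimes>\<^bsub>G\<omega>\<^esub> word_val G\<omega> (\<lambda>t. a t n) id (drop_params w)"
  unfolding bval_def
proof (rule group.word_val_split_commuting[OF group_union subgroup_stage])
  show "letters_in I (carrier (G n)) (bprev n) id w"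
    by (rule stage_word_letters_in[OF assms order_refl bprev_in])
  show "\<And>t. t \<in> I \<Longrightarrow> a t n \<in> carrier G\<omega>" by (rule a_in_union)
  show "\<And>t s. t \<in> I \<Longrightarrow> s \<in> carrier (G n) \<Longrightarrow>
          a t n \<otimes>\<^bsub>G\<omega>\<^esub> s = s \<otimes>\<^bsub>G\<omega>\<^esub> a t n"
    using a_commute by (simp add: union_mult[of _ _ "Suc n"])
qed (rule bprod_eq_bprev_mult)

lemma word_val_bprev_in: "stage_word n w \<Longrightarrow> word_val G\<omega> (bprev n) id w \<in> carrier (G n)"
  using bprev_in
  by (intro group.word_val_in_subgroup[OF group_union subgroup_stage, of I])
    (auto intro: stage_word_letters_in)

lemma word_val_a_in_generate:
  "stage_word n w \<Longrightarrow>
   word_val G\<omega> (\<lambda>t. a t n) id (drop_params w) \<in> generate G\<omega> ((\<lambda>t. a t n) ` I)"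
  by (intro group.drop_params_in_generate[OF group_union]) (simp add: stage_word_def)

lemma generate_a_inter_stage:
  "generate G\<omega> ((\<lambda>t. a t n) ` I) \<inter> carrier (G n) = {\<one>\<^bsub>G\<omega>\<^esub>}"
  using beta[of n] generate_stage[of "(\<lambda>t. a t n) ` I" "Suc n"] a_in by (auto simp: union_one[of n])

lemma bval_eq_one_split_iff:
  assumes "stage_word n w"
  shows "bval n w = \<one>\<^bsub>G\<omega>\<^esub> \<longleftrightarrow>
           word_val G\<omega> (bprev n) id w = \<one>\<^bsub>G\<omega>\<^esub> \<and>
           word_val G\<omega> (\<lambda>t. a t n) id (drop_params w) = \<one>\<^bsub>G\<omega>\<^esub>"
proof -
  have "generate G\<omega> ((\<lambda>t. a t n) ` I) \<subseteq> carrier G\<omega>"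
    by (rule group.generate_incl[OF group_union]) (auto intro: a_in_union)
  then show ?thesis
    using group.mult_eq_one_iff_inter_trivial[OF group_union subgroup_stage word_val_bprev_in[OF assms]
        word_val_a_in_generate[OF assms] _ generate_a_inter_stage]
    by (simp add: bval_split[OF assms])
qed

lemma a_word_eq_one_Suc:
  assumes "stage_word n u" "word_val G\<omega> (\<lambda>t. a t n) id u = \<one>\<^bsub>G\<omega>\<^esub>"
  shows "word_val G\<omega> (\<lambda>t. a t (Suc n)) id u = \<one>\<^bsub>G\<omega>\<^esub>"
proof -
  have stage: "word_val (G (Suc k)) (\<lambda>t. a t k) id u = word_val G\<omega> (\<lambda>t. a t k) id u"
    if "n \<le> k" for k
  proof (rule word_val_stage)
    show "letters_in I (carrier (G (Suc k))) (\<lambda>t. a t k) id u"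
      using stage_word_mono[OF assms(1) that] stage_mono[of k "Suc k"] a_in
      by (intro stage_word_letters_in) auto
  qed
  have "(True, u) \<in> tp_bs I (carrier (G n)) (G (Suc n)) id (\<lambda>t. a t n)"
    using assms stage[of n] by (simp add: tp_bs_def stage_word_def union_one[of "Suc n"])
  then have "(True, u) \<in> tp_bs I (carrier (G (Suc n))) (G (Suc (Suc n))) id (\<lambda>t. a t (Suc n))"
    using alpha by blast
  then show ?thesis using stage[of "Suc n"] by (simp add: tp_bs_def union_one[of "Suc (Suc n)"])
qed

lemma bval_eq_one_Suc_iff:
  assumes w: "stage_word n w"
  shows "bval (Suc n) w = \<one>\<^bsub>G\<omega>\<^esub> \<longleftrightarrow> bval n w = \<one>\<^bsub>G\<omega>\<^esub>"
proof -
  have w': "stage_word (Suc n) w" using w by (rule stage_word_mono) simp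
  have "bprev (Suc n) = (\<lambda>t. bprod G a t n)" by (simp add: bprev_def fun_eq_iff)
  then have "bval (Suc n) w = \<one>\<^bsub>G\<omega>\<^esub> \<longleftrightarrow> bval n w = \<one>\<^bsub>G\<omega>\<^esub> \<and>
      word_val G\<omega> (\<lambda>t. a t (Suc n)) id (drop_params w) = \<one>\<^bsub>G\<omega>\<^esub>"
    using bval_eq_one_split_iff[OF w'] by (simp add: bval_def)
  moreover have "bval n w = \<one>\<^bsub>G\<omega>\<^esub> \<Longrightarrow>
      word_val G\<omega> (\<lambda>t. a t n) id (drop_params w) = \<one>\<^bsub>G\<omega>\<^esub>"
    using bval_eq_one_split_iff[OF w] by simp
  ultimately show ?thesis using a_word_eq_one_Suc[OF stage_word_drop_params[OF w]] by blast
qed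

lemma bval_eq_one_iff:
  assumes "stage_word n w" "n \<le> m"
  shows "bval m w = \<one>\<^bsub>G\<omega>\<^esub> \<longleftrightarrow> bval n w = \<one>\<^bsub>G\<omega>\<^esub>"
  using assms(2)
proof (induction m rule: dec_induct)
  case (step m)
  then show ?case using bval_eq_one_Suc_iff stage_word_mono[OF assms(1)] by blast
qed simp

lemma eventually_bval_eq_one_iff:
  assumes "stage_word n w"
  shows "(\<forall>\<^sub>F m in sequentially. bval m w = \<one>\<^bsub>G\<omega>\<^esub>) \<longleftrightarrow> bval n w = \<one>\<^bsub>G\<omega>\<^esub>"
proof
  assume "\<forall>\<^sub>F m in sequentially. bval m w = \<one>\<^bsub>G\<omega>\<^esub>"
  then obtain N where "\<And>m. N \<le> m \<Longrightarrow> bval m w = \<one>\<^bsub>G\<omega>\<^esub>"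
    unfolding eventually_sequentially by blast
  then show "bval n w = \<one>\<^bsub>G\<omega>\<^esub>" using bval_eq_one_iff[OF assms, of "max N n"] by simp
next
  assume "bval n w = \<one>\<^bsub>G\<omega>\<^esub>"
  then show "\<forall>\<^sub>F m in sequentially. bval m w = \<one>\<^bsub>G\<omega>\<^esub>"
    using bval_eq_one_iff[OF assms] unfolding eventually_sequentially by blast
qed

end

section \<open>The limit group\<close>

text \<open>Elements g of G_omega (Inl g) become parameters and the new generators (Inr t)
  become the variables x_t.\<close>

definition list_word :: "('a + 'i) list \<Rightarrow> ('i, 'a) gword" where
  "list_word l = map (\<lambda>c. (case c of Inl g \<Rightarrow> Inr g | Inr t \<Rightarrow> Inl t, False)) l"

context increment_chain
begin

definition letters :: "('a + 'i) set" where
  "letters = Inl ` carrier G\<omega> \<union> Inr ` I"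

definition stage_letters :: "nat \<Rightarrow> ('a + 'i) set" where
  "stage_letters n = Inl ` carrier (G n) \<union> Inr ` I"

lemma Inl_in_letters [simp]: "Inl g \<in> letters \<longleftrightarrow> g \<in> carrier G\<omega>"
  by (auto simp: letters_def)

lemma Inr_in_letters [simp]: "Inr t \<in> letters \<longleftrightarrow> t \<in> I"
  by (auto simp: letters_def)

lemma stage_letters_subset: "stage_letters n \<subseteq> letters"
  unfolding stage_letters_def letters_def carrier_union by blast

lemma finite_letters_stage:
  assumes "finite B" "B \<subseteq> letters"
  obtains n where "B \<subseteq> stage_letters n"
proof -
  have "finite (Inl -` B)" using assms(1) by (rule finite_vimageI) (simp add: inj_on_def)
  moreover have "Inl -` B \<subseteq> carrier G\<omega>" using assms(2) by (auto simp: letters_def)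
  ultimately obtain n where "Inl -` B \<subseteq> carrier (G n)" using finite_subset_stage by blast
  have "c \<in> stage_letters n" if "c \<in> B" for c
  proof (cases c)
    case (Inl g)
    then show ?thesis using that \<open>Inl -` B \<subseteq> carrier (G n)\<close> by (auto simp: stage_letters_def)
  next
    case (Inr t)
    then show ?thesis using that assms(2) by (auto simp: letters_def stage_letters_def)
  qed
  then show thesis by (intro that subsetI)
qed

lemma stage_word_list_word: "l \<in> lists (stage_letters n) \<Longrightarrow> stage_word n (list_word l)"
  by (force simp: stage_word_def stage_letters_def list_word_def word_vars_def word_params_def)

lemma stage_word_append: "stage_word n (w @ w') \<longleftrightarrow> stage_word n w \<and> stage_word n w'"
  by (auto simp: stage_word_def word_vars_append word_params_append)

lemma stage_word_inv_word: "stage_word n (inv_word w) \<longleftrightarrow> stage_word n w"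
  by (simp add: stage_word_def word_vars_inv_word word_params_inv_word)

definition list_val :: "nat \<Rightarrow> ('a + 'i) list \<Rightarrow> 'a" where
  "list_val n l = bval n (list_word l)"

lemma letters_in_list_word:
  "l \<in> lists letters \<Longrightarrow> letters_in I (carrier G\<omega>) (\<lambda>t. bprod G a t n) id (list_word l)"
  using bprod_in by (force simp: letters_in_def list_word_def letters_def carrier_union)

lemma list_val_closed: "l \<in> lists letters \<Longrightarrow> list_val n l \<in> carrier G\<omega>"
  unfolding list_val_def bval_def
  by (rule group.word_val_closed[OF group_union letters_in_list_word])

lemma list_val_Nil [simp]: "list_val n [] = \<one>\<^bsub>G\<omega>\<^esub>"
  by (simp add: list_val_def bval_def list_word_def)

lemma list_val_append:
  "l \<in> lists letters \<Longrightarrow> l' \<in> lists letters \<Longrightarrow> list_val n (l @ l') = list_val n l \<otimes>\<^bsub>G\<omega>\<^esub> list_val n l'"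
  unfolding list_val_def bval_def list_word_def map_append
  by (rule group.word_val_append[OF group_union letters_in_list_word[unfolded list_word_def]])
    (auto intro: letters_in_list_word[unfolded list_word_def])

lemma list_val_letter_Inl: "g \<in> carrier G\<omega> \<Longrightarrow> list_val n [Inl g] = g"
  by (simp add: list_val_def bval_def list_word_def group.is_monoid[OF group_union])

lemma list_val_letter_Inr: "t \<in> I \<Longrightarrow> list_val n [Inr t] = bprod G a t n"
  using bprod_in_union[of t n]
  by (simp add: list_val_def bval_def list_word_def group.is_monoid[OF group_union])

lemma list_val_in_stage:
  assumes "l \<in> lists (stage_letters n)"
  shows "list_val n l \<in> carrier (G (Suc n))"
proof -
  have "letters_in I (carrier (G (Suc n))) (\<lambda>t. bprod G a t n) id (list_word l)"
    using stage_mono[of n "Suc n"] bprod_in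
    by (intro stage_word_letters_in[OF stage_word_list_word[OF assms]]) auto
  then show ?thesis
    unfolding list_val_def bval_def
    by (rule group.word_val_in_subgroup[OF group_union subgroup_stage])
qed

definition limit_eq :: "('a + 'i) list \<Rightarrow> ('a + 'i) list \<Rightarrow> bool" where
  "limit_eq l l' \<longleftrightarrow> (\<forall>\<^sub>F n in sequentially. list_val n l = list_val n l')"

lemma limit_eq_iff_stage:
  assumes l: "l \<in> lists (stage_letters n)" and l': "l' \<in> lists (stage_letters n)"
  shows "limit_eq l l' \<longleftrightarrow> list_val n l = list_val n l'"
proof -
  interpret K: group G\<omega> by (rule group_union)
  define w where "w = list_word l @ inv_word (list_word l')"
  have w: "stage_word n w"
    using l l' by (simp add: w_def stage_word_append stage_word_inv_word stage_word_list_word)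
  have "l \<in> lists letters" "l' \<in> lists letters" using l l' stage_letters_subset by auto
  then have "bval m w = list_val m l \<otimes>\<^bsub>G\<omega>\<^esub> inv\<^bsub>G\<omega>\<^esub> list_val m l'"
      "list_val m l \<in> carrier G\<omega>" "list_val m l' \<in> carrier G\<omega>" for m
    using letters_in_list_word[of l m] letters_in_list_word[of l' m] list_val_closed
    by (simp_all add: w_def bval_def list_val_def K.word_val_append[of I] K.word_val_inv_word[of I])
  then have "list_val m l = list_val m l' \<longleftrightarrow> bval m w = \<one>\<^bsub>G\<omega>\<^esub>" for m
    using K.right_cancel[of "inv\<^bsub>G\<omega>\<^esub> list_val m l'" "list_val m l" "list_val m l'"] by simp
  then show ?thesis
    unfolding limit_eq_def using eventually_bval_eq_one_iff[OF w] by simp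
qed

lemma list_val_replicate:
  "l \<in> lists letters \<Longrightarrow> list_val n (concat (replicate k l)) = list_val n l [^]\<^bsub>G\<omega>\<^esub> k"
proof (induction k)
  case (Suc k)
  moreover have "concat (replicate k l) \<in> lists letters" using Suc.prems by (induction k) auto
  ultimately show ?case
    using monoid.nat_pow_Suc2[OF group.is_monoid[OF group_union]
        list_val_closed[OF Suc.prems, of n]]
    by (simp add: list_val_append)
qed simp

lemma limit_eq_power_congruent_Nil:
  assumes "l \<in> lists letters"
  shows "\<exists>k. limit_eq (concat (replicate (Suc k) l)) []"
proof -
  have "set l \<subseteq> letters" using assms by (simp add: lists_eq_set)
  then obtain n where "set l \<subseteq> stage_letters n" by (rule finite_letters_stage[OF finite_set])
  then have n: "l \<in> lists (stage_letters n)" by (simp add: lists_eq_set)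
  obtain k :: nat where k: "k > 0" "list_val n l [^]\<^bsub>G\<omega>\<^esub> k = \<one>\<^bsub>G\<omega>\<^esub>"
    using locally_finite_group_pow_eq_one[OF locally_finite_stage list_val_in_stage[OF n]]
    by (auto simp: nat_pow_stage union_one[of "Suc n", symmetric])
  have "concat (replicate k l) \<in> lists (stage_letters n)" using n by (induction k) auto
  then have "limit_eq (concat (replicate k l)) []"
    using limit_eq_iff_stage[of _ n "[]"] list_val_replicate[OF assms] k(2) by simp
  then show ?thesis using k(1) gr0_implies_Suc by blast
qed

sublocale limit: list_congruence letters limit_eq
proof
  show "equivp limit_eq"
    by (rule equivpI)
      (auto simp: reflp_def symp_def transp_def limit_eq_def eq_commute elim: eventually_elim2)
  show "limit_eq (u @ v) (u' @ v')"
    if "limit_eq u u'" "limit_eq v v'" "u \<in> lists letters" "u' \<in> lists letters"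
       "v \<in> lists letters" "v' \<in> lists letters" for u u' v v'
    using that(1,2) unfolding limit_eq_def
    by eventually_elim (simp add: list_val_append that(3-6))
qed (rule limit_eq_power_congruent_Nil)

abbreviation H :: "('a + 'i) list monoid" where
  "H \<equiv> limit.quotient_group"

definition embed :: "'a \<Rightarrow> ('a + 'i) list" where
  "embed g = limit.rep [Inl g]"

definition b\<omega> :: "'i \<Rightarrow> ('a + 'i) list" where
  "b\<omega> t = limit.rep [Inr t]"

lemma eventually_list_val_rep:
  "l \<in> lists letters \<Longrightarrow> \<forall>\<^sub>F n in sequentially. list_val n (limit.rep l) = list_val n l"
  using limit.rep_spec unfolding limit_eq_def by blast

lemma eventually_list_val_mult:
  assumes "x \<in> carrier H" "y \<in> carrier H"
  shows "\<forall>\<^sub>F n in sequentially. list_val n (x \<otimes>\<^bsub>H\<^esub> y) = list_val n x \<otimes>\<^bsub>G\<omega>\<^esub> list_val n y"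
proof -
  have "x \<in> lists letters" "y \<in> lists letters" using assms limit.quotient_group_carrierD by blast+
  then show ?thesis
    using eventually_list_val_rep[of "x @ y"]
    by (simp add: limit.quotient_group_mult list_val_append)
qed

lemma eventually_list_val_inv:
  assumes x: "x \<in> carrier H"
  shows "\<forall>\<^sub>F n in sequentially. list_val n (inv\<^bsub>H\<^esub> x) = inv\<^bsub>G\<omega>\<^esub> list_val n x"
proof -
  interpret K: group G\<omega> by (rule group_union)
  interpret Q: group H by (rule limit.group_quotient)
  have ix: "inv\<^bsub>H\<^esub> x \<in> carrier H" by (rule Q.inv_closed[OF x])
  then have L: "x \<in> lists letters" "inv\<^bsub>H\<^esub> x \<in> lists letters"
    using x limit.quotient_group_carrierD by blast+
  have "\<forall>\<^sub>F n in sequentially. list_val n (x \<otimes>\<^bsub>H\<^esub> inv\<^bsub>H\<^esub> x) = \<one>\<^bsub>G\<omega>\<^esub>"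
    using x eventually_list_val_rep[of "[]"] by simp
  then have "\<forall>\<^sub>F n in sequentially. list_val n x \<otimes>\<^bsub>G\<omega>\<^esub> list_val n (inv\<^bsub>H\<^esub> x) = \<one>\<^bsub>G\<omega>\<^esub>"
    using eventually_list_val_mult[OF x ix] by eventually_elim simp
  then show ?thesis
  proof eventually_elim
    case (elim n)
    have c: "list_val n x \<in> carrier G\<omega>" "list_val n (inv\<^bsub>H\<^esub> x) \<in> carrier G\<omega>"
      using L list_val_closed by blast+
    show ?case by (rule K.inv_equality[OF K.inv_comm[OF elim c] c, symmetric])
  qed
qed

lemma eventually_list_val_letter_val:
  assumes "stage_word n [l]"
  shows "letter_val H b\<omega> embed l \<in> carrier H \<and>
    (\<forall>\<^sub>F m in sequentially. list_val m (letter_val H b\<omega> embed l)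
                               = letter_val G\<omega> (\<lambda>t. bprod G a t m) id l)"
proof -
  obtain v f where l: "l = (v, f)" by (cases l)
  define c where "c = (case v of Inl t \<Rightarrow> Inr t | Inr g \<Rightarrow> Inl g)"
  have c: "c \<in> letters"
    using assms stage_letters_subset
    by (cases v) (auto simp: l c_def stage_word_def word_vars_def word_params_def carrier_union)
  have Q: "letter_val H b\<omega> embed l =
      (if f then inv\<^bsub>H\<^esub> limit.rep [c] else limit.rep [c])"
    by (cases v) (simp_all add: l c_def b\<omega>_def embed_def Let_def)
  have K: "letter_val G\<omega> (\<lambda>t. bprod G a t m) id l =
      (if f then inv\<^bsub>G\<omega>\<^esub> list_val m [c] else list_val m [c])" for m
    using c by (cases v) (auto simp: l c_def Let_def list_val_letter_Inl list_val_letter_Inr)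
  have rc: "limit.rep [c] \<in> carrier H" using c by simp
  have base: "\<forall>\<^sub>F m in sequentially. list_val m (limit.rep [c]) = list_val m [c]"
    using c by (intro eventually_list_val_rep) simp
  show ?thesis
  proof (cases f)
    case True
    have "\<forall>\<^sub>F m in sequentially. list_val m (inv\<^bsub>H\<^esub> limit.rep [c]) = inv\<^bsub>G\<omega>\<^esub> list_val m [c]"
      using eventually_list_val_inv[OF rc] base by eventually_elim simp
    then show ?thesis
      using rc group.inv_closed[OF limit.group_quotient rc] by (simp add: Q K True)
  qed (use rc base in \<open>simp add: Q K\<close>)
qed

lemma eventually_list_val_word_val:
  "stage_word n w \<Longrightarrow> word_val H b\<omega> embed w \<in> carrier H \<and>
     (\<forall>\<^sub>F m in sequentially. list_val m (word_val H b\<omega> embed w) = bval m w)"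
proof (induction w)
  case Nil
  show ?case using eventually_list_val_rep[of "[]"] by (simp add: bval_def)
next
  case (Cons l w)
  have "stage_word n [l]" "stage_word n w"
    using Cons.prems stage_word_append[of n "[l]" w] by simp_all
  note hl = eventually_list_val_letter_val[OF this(1)] and hw = Cons.IH[OF this(2)]
  have "\<forall>\<^sub>F m in sequentially. list_val m (word_val H b\<omega> embed (l # w)) = bval m (l # w)"
    using eventually_list_val_mult[OF hl[THEN conjunct1] hw[THEN conjunct1]]
      hl[THEN conjunct2] hw[THEN conjunct2]
    by eventually_elim (simp del: letter_val.simps add: bval_def)
  moreover have "word_val H b\<omega> embed (l # w) \<in> carrier H"
    using monoid.m_closed[OF group.is_monoid[OF limit.group_quotient]
        hl[THEN conjunct1] hw[THEN conjunct1]]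
    by (simp del: letter_val.simps limit.quotient_group_simps)
  ultimately show ?case by blast
qed

lemma word_val_limit_eq_one_iff:
  assumes w: "stage_word n w"
  shows "word_val H b\<omega> embed w = \<one>\<^bsub>H\<^esub> \<longleftrightarrow> bval n w = \<one>\<^bsub>G\<omega>\<^esub>"
proof -
  define x where "x = word_val H b\<omega> embed w"
  have "x \<in> carrier H" and ev: "\<forall>\<^sub>F m in sequentially. list_val m x = bval m w"
    using eventually_list_val_word_val[OF w] by (simp_all add: x_def)
  then have x: "x \<in> lists letters" "limit.rep x = x" using limit.quotient_group_carrierD by blast+
  have "x = \<one>\<^bsub>H\<^esub> \<longleftrightarrow> limit_eq x []"
    using limit.rep_eq_iff[OF x(1), of "[]"] x(2) by simp
  also have "\<dots> \<longleftrightarrow> (\<forall>\<^sub>F m in sequentially. bval m w = \<one>\<^bsub>G\<omega>\<^esub>)"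
    unfolding limit_eq_def list_val_Nil using ev by (rule eventually_subst[OF eventually_mono]) simp
  also have "\<dots> \<longleftrightarrow> bval n w = \<one>\<^bsub>G\<omega>\<^esub>" by (rule eventually_bval_eq_one_iff[OF w])
  finally show ?thesis by (simp add: x_def)
qed

lemma tp_bs_limit:
  "tp_bs I (carrier (G n)) H embed b\<omega>
     = tp_bs I (carrier (G n)) (G (Suc n)) id (\<lambda>t. bprod G a t n)"
proof -
  have "word_val H b\<omega> embed w = \<one>\<^bsub>H\<^esub> \<longleftrightarrow>
        word_val (G (Suc n)) (\<lambda>t. bprod G a t n) id w = \<one>\<^bsub>G (Suc n)\<^esub>"
    if w: "stage_word n w" for w
  proof -
    have "letters_in I (carrier (G (Suc n))) (\<lambda>t. bprod G a t n) id w"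
      using stage_mono[of n "Suc n"] bprod_in by (intro stage_word_letters_in[OF w]) auto
    then have "word_val (G (Suc n)) (\<lambda>t. bprod G a t n) id w = bval n w"
      unfolding bval_def by (rule word_val_stage)
    then show ?thesis using word_val_limit_eq_one_iff[OF w] by (simp add: union_one[of "Suc n"])
  qed
  then show ?thesis by (simp add: tp_bs_def stage_word_def cong: conj_cong)
qed

lemma embed_in_carrier: "g \<in> carrier G\<omega> \<Longrightarrow> embed g \<in> carrier H"
  by (simp add: embed_def)

lemma embed_hom: "embed \<in> hom (G n) H"
proof (rule homI)
  fix x y assume xy: "x \<in> carrier (G n)" "y \<in> carrier (G n)"
  then have "x \<otimes>\<^bsub>G n\<^esub> y \<in> carrier (G n)"
    by (rule monoid.m_closed[OF group.is_monoid[OF group_stage]])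
  with xy have xyK: "x \<in> carrier G\<omega>" "y \<in> carrier G\<omega>"
    "x \<otimes>\<^bsub>G\<omega>\<^esub> y \<in> carrier G\<omega>"
    by (auto simp: carrier_union union_mult[of _ _ n])
  have "limit_eq [Inl (x \<otimes>\<^bsub>G n\<^esub> y)] ([Inl x] @ [Inl y])"
    using xyK list_val_append[of "[Inl x]" "[Inl y]"]
    by (simp add: limit_eq_def list_val_letter_Inl union_mult[of _ _ n, symmetric])
  then have "embed (x \<otimes>\<^bsub>G n\<^esub> y) = limit.rep ([Inl x] @ [Inl y])"
    unfolding embed_def by (rule limit.rep_cong)
  also have "\<dots> = embed x \<otimes>\<^bsub>H\<^esub> embed y"
    using xyK by (simp add: embed_def limit.rep_mult)
  finally show "embed (x \<otimes>\<^bsub>G n\<^esub> y) = embed x \<otimes>\<^bsub>H\<^esub> embed y" .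
next
  fix x assume "x \<in> carrier (G n)"
  then show "embed x \<in> carrier H" by (intro embed_in_carrier) (auto simp: carrier_union)
qed

lemma inj_on_embed: "inj_on embed (carrier G\<omega>)"
proof (rule inj_onI)
  fix x y assume x: "x \<in> carrier G\<omega>" and y: "y \<in> carrier G\<omega>" and "embed x = embed y"
  then have "limit_eq [Inl x] [Inl y]" by (simp add: embed_def limit.rep_eq_iff)
  then show "x = y" using x y by (simp add: limit_eq_def list_val_letter_Inl)
qed

lemma carrier_limit_generate:
  "carrier H = generate H (embed ` carrier G\<omega> \<union> b\<omega> ` I)"
proof -
  have "(\<lambda>c. limit.rep [c]) ` letters = embed ` carrier G\<omega> \<union> b\<omega> ` I"
    unfolding letters_def embed_def b\<omega>_def by (simp add: image_Un image_image)
  then show ?thesis using limit.carrier_quotient_generate by simp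
qed

lemma list_val_in_generate:
  assumes "B \<subseteq> letters" "l \<in> lists B"
  shows "list_val n l \<in> generate G\<omega> ((\<lambda>c. list_val n [c]) ` B)"
  using assms(2)
proof induction
  case Nil
  then show ?case using generate.one[of G\<omega>] by simp
next
  case (Cons c l)
  then have "list_val n (c # l) = list_val n [c] \<otimes>\<^bsub>G\<omega>\<^esub> list_val n l"
    using assms(1) list_val_append[of "[c]" l n] by auto
  then show ?case using Cons by (simp add: generate.eng generate.incl)
qed

lemma locally_finite_limit: "locally_finite_group H"
proof (rule limit.locally_finite_quotient)
  fix B assume "finite B" "B \<subseteq> letters"
  then obtain n where Bn: "B \<subseteq> stage_letters n" by (rule finite_letters_stage)
  define V where "V = (\<lambda>c. list_val n [c]) ` B"
  have V: "V \<subseteq> carrier (G (Suc n))" using Bn list_val_in_stage by (auto simp: V_def)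
  have "finite (generate (G (Suc n)) V)"
    using locally_finite_stage[of "Suc n"] V \<open>finite B\<close>
    by (simp add: locally_finite_group_def V_def)
  moreover have "list_val n ` lists B \<subseteq> generate (G (Suc n)) V"
    using list_val_in_generate[of B] \<open>B \<subseteq> letters\<close> generate_stage[OF V] by (auto simp: V_def)
  ultimately have "finite (list_val n ` lists B)" by (rule finite_subset[rotated])
  moreover have "limit.rep l = limit.rep l'"
    if "l \<in> lists B" "l' \<in> lists B" "list_val n l = list_val n l'" for l l'
    using that Bn limit_eq_iff_stage[of l n l'] lists_mono by (blast intro: limit.rep_cong)
  ultimately show "finite (limit.rep ` lists B)" by (rule finite_image_factor)
qed

end

theorem claim2p20:
  fixes G :: "nat \<Rightarrow> 'a monoid"
    and I :: "'i set"
    and a :: "'i \<Rightarrow> nat \<Rightarrow> 'a"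
  assumes lf: "\<And>n. locally_finite_group (G n)"
    and sub: "\<And>n. subgroup (carrier (G n)) (G (Suc n))"
    and restr: "\<And>n. G n = (G (Suc n))\<lparr>carrier := carrier (G n)\<rparr>"
    and a_in: "\<And>n t. t \<in> I \<Longrightarrow> a t n \<in> carrier (G (Suc n))"
    and alpha: "\<And>n. tp_bs I (carrier (G n)) (G (Suc n)) id (\<lambda>t. a t n)
                   \<subseteq> tp_bs I (carrier (G (Suc n))) (G (Suc (Suc n))) id (\<lambda>t. a t (Suc n))"
    and beta: "\<And>n. generate (G (Suc n)) ((\<lambda>t. a t n) ` I) \<inter> carrier (G n) = {\<one>\<^bsub>G n\<^esub>}"
    and e: "\<And>n t g. t \<in> I \<Longrightarrow> g \<in> carrier (G n) \<Longrightarrow>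
              a t n \<otimes>\<^bsub>G (Suc n)\<^esub> g = g \<otimes>\<^bsub>G (Suc n)\<^esub> a t n"
  shows "\<exists>(H :: ('a + 'i) list monoid) (h :: 'a \<Rightarrow> ('a + 'i) list) (b :: 'i \<Rightarrow> ('a + 'i) list).
           locally_finite_group H \<and>
           (\<forall>n. h \<in> hom (G n) H) \<and>
           inj_on h (\<Union>n. carrier (G n)) \<and>
           (\<forall>t\<in>I. b t \<in> carrier H) \<and>
           carrier H = generate H (h ` (\<Union>n. carrier (G n)) \<union> b ` I) \<and>
           (\<forall>n. tp_bs I (carrier (G n)) H h b =
                 tp_bs I (carrier (G n)) (G (Suc n)) id (\<lambda>t. bprod G a t n))"
proof -
  interpret increment_chain G I a
    by (intro increment_chain.intro locally_finite_chain.intro increment_chain_axioms.intro)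
      (fact assms)+
  have "\<forall>t\<in>I. b\<omega> t \<in> carrier H" by (simp add: b\<omega>_def)
  then show ?thesis
    using locally_finite_limit embed_hom inj_on_embed carrier_limit_generate tp_bs_limit
    by (intro exI[of _ H] exI[of _ embed] exI[of _ b\<omega>]) (simp add: carrier_union)
qed

end
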